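(* Let $(\omega_k)_{k\in\mathbb{N}}$ be a (not necessarily convex) growth family, $(J,|\cdot|)$ a graded index set of finite type and $B$ a finite-dimensional Banach space. Then the (LB)-space $\ell^\infty_{\rightarrow}(J,B)$ is a Silva space, i.e.\ it can be written as a locally convex direct limit of Banach spaces with compact operators as bonding maps. In particular, it is compactly regular: every compact subset of $\ell^\infty_{\rightarrow}(J,B)$ is a compact subset of one of the steps $\ell^\infty_k(J,B)$.
   Context: A graded index set is a set $J$ with a map $|\cdot|\colon J\to\mathbb{N}_0$; it is of finite type if each $\{\tau\in J:|\tau|=n\}$ is finite. Growth family $(\omega_k)_{k\in\mathbb{N}}$, $\omega_k\colon\mathbb{N}_0\to\mathbb{N}$: (W1) $\omega_k(0)=1$, $\omega_k(n)\le\omega_{k+1}(n)$; (W2) $\omega_k(n)\omega_k(m)\le\omega_k(n+m)$; (W3) for each $k_1$ some $k_2\ge k_1$ with $\omega_{k_2}(n)\ge2^n\omega_{k_1}(n)$ for all $n$. $\ell^\infty_k(J,B)$ is the Banach space of $f\colon J\to B$ with $\|f\|_{\ell^\infty_k}=\sup_\tau\|f(\tau)\|/\omega_k(|\tau|)<\infty$; $\ell^\infty_{\rightarrow}(J,B)=\bigcup_k\ell^\infty_k(J,B)$ with the locally convex direct limit topology, the bonding maps being the inclusions. *)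

theory Defs
  imports "HOL-Analysis.Analysis"
begin

definition growth_family :: "(nat \<Rightarrow> nat \<Rightarrow> nat) \<Rightarrow> bool" where
  "growth_family \<omega> \<longleftrightarrow>
     (\<forall>k n. \<omega> k n \<ge> 1) \<and>
     (\<forall>k. \<omega> k 0 = 1) \<and> (\<forall>k n. \<omega> k n \<le> \<omega> (Suc k) n) \<and>
     (\<forall>k n m. \<omega> k n * \<omega> k m \<le> \<omega> k (n + m)) \<and>
     (\<forall>k1. \<exists>k2\<ge>k1. \<forall>n. \<omega> k2 n \<ge> 2 ^ n * \<omega> k1 n)"

definition finite_type_grading :: "('j \<Rightarrow> nat) \<Rightarrow> bool" where
  "finite_type_grading d \<longleftrightarrow> (\<forall>n. finite {\<tau>. d \<tau> = n})"

definition wnorm :: "(nat \<Rightarrow> nat \<Rightarrow> nat) \<Rightarrow> ('j \<Rightarrow> nat) \<Rightarrow> nat \<Rightarrow> ('j \<Rightarrow> 'b::real_normed_vector) \<Rightarrow> real" where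
  "wnorm \<omega> d k f = (SUP \<tau>. norm (f \<tau>) / real (\<omega> k (d \<tau>)))"

definition lk :: "(nat \<Rightarrow> nat \<Rightarrow> nat) \<Rightarrow> ('j \<Rightarrow> nat) \<Rightarrow> nat \<Rightarrow> ('j \<Rightarrow> 'b::real_normed_vector) set" where
  "lk \<omega> d k = {f. bdd_above (range (\<lambda>\<tau>. norm (f \<tau>) / real (\<omega> k (d \<tau>))))}"

definition step_top :: "(nat \<Rightarrow> nat \<Rightarrow> nat) \<Rightarrow> ('j \<Rightarrow> nat) \<Rightarrow> nat \<Rightarrow> ('j \<Rightarrow> 'b::real_normed_vector) topology" where
  "step_top \<omega> d k = topology (\<lambda>U. U \<subseteq> lk \<omega> d k \<and>
     (\<forall>f\<in>U. \<exists>e>0. {g \<in> lk \<omega> d k. wnorm \<omega> d k (\<lambda>\<tau>. g \<tau> - f \<tau>) < e} \<subseteq> U))"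

definition abs_convex :: "('j \<Rightarrow> 'b::real_normed_vector) set \<Rightarrow> bool" where
  "abs_convex V \<longleftrightarrow> (\<forall>f\<in>V. \<forall>g\<in>V. \<forall>a b::real. \<bar>a\<bar> + \<bar>b\<bar> \<le> 1 \<longrightarrow> (\<lambda>\<tau>. a *\<^sub>R f \<tau> + b *\<^sub>R g \<tau>) \<in> V)"

text \<open>Locally convex direct limit topology of the steps l^\<infinity>_k, k \<in> I (bonding maps the
  inclusions), on the union of these steps: a set is open iff it contains, around each of its
  points f, a translate f + V of an absolutely convex set V whose trace on every step is a
  0-neighbourhood of that step.\<close>
definition dl_top :: "(nat \<Rightarrow> nat \<Rightarrow> nat) \<Rightarrow> ('j \<Rightarrow> nat) \<Rightarrow> nat set \<Rightarrow> ('j \<Rightarrow> 'b::real_normed_vector) topology" where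
  "dl_top \<omega> d I = topology (\<lambda>U. U \<subseteq> (\<Union>k\<in>I. lk \<omega> d k) \<and>
     (\<forall>f\<in>U. \<exists>V. abs_convex V \<and> V \<subseteq> (\<Union>k\<in>I. lk \<omega> d k) \<and>
        (\<forall>k\<in>I. \<exists>e>0. {g \<in> lk \<omega> d k. wnorm \<omega> d k g < e} \<subseteq> V) \<and>
        (\<forall>v\<in>V. (\<lambda>\<tau>. f \<tau> + v \<tau>) \<in> U)))"

end

theory Submission
  imports Defs
begin

text \<open>
  By (W3) the weights of a later step k' exceed those of step k by a factor 2^n in degree n.
  Hence on a ball of the step k only finitely many coordinates (those of small degree, finitely
  many by finite type) matter for the norm of step k'; as B is finite-dimensional, the ball is
  compact in step k', being a continuous image of a Tychonoff product of compact balls.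
  Conversely, a compact set K of the direct limit is bounded for every seminorm
  f \<mapsto> sup of \<parallel>f \<tau>\<parallel> / c \<tau> over all \<tau>, where c dominates every weight \<omega> k; choosing c along
  a diagonal shows that K lies in a ball of some step k, hence is a closed subset of a compact
  subset of step k'.
\<close>

section \<open>Compactness in finite-dimensional normed spaces\<close>

lemma abs_mult_infdist_le_norm:
  fixes a x :: "'a::real_normed_vector"
  assumes "subspace T" "x - c *\<^sub>R a \<in> T"
  shows "\<bar>c\<bar> * infdist a T \<le> norm x"
proof (cases "c = 0")
  case False
  have "- inverse c *\<^sub>R (x - c *\<^sub>R a) \<in> T" using assms subspace_scale by blast
  then have "infdist a T \<le> dist a (- inverse c *\<^sub>R (x - c *\<^sub>R a))" by (rule infdist_le)
  also have "\<dots> = norm x / \<bar>c\<bar>"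
    using False by (simp add: dist_norm algebra_simps divide_inverse_commute)
  finally show ?thesis using False by (simp add: field_simps mult.commute)
qed simp

lemma bounded_seq_in_finite_span_has_convergent_subseq:
  fixes S :: "'b::real_normed_vector set" and x :: "nat \<Rightarrow> 'b"
  assumes "finite S" "range x \<subseteq> span S" "bounded (range x)"
  shows "\<exists>l r. l \<in> span S \<and> strict_mono r \<and> (x \<circ> r) \<longlonglongrightarrow> l"
  using assms
proof (induction S arbitrary: x rule: finite_induct)
  case empty
  then have "x = (\<lambda>n. 0)" by auto
  then show ?case by (intro exI[of _ 0] exI[of _ id]) (auto simp: strict_mono_def)
next
  case (insert a F)
  have closed_span_F: "closed (span F)"
    unfolding closed_sequential_limits
  proof (intro allI impI)
    fix y l assume y: "(\<forall>n. y n \<in> span F) \<and> y \<longlonglongrightarrow> l"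
    then obtain l' r where "l' \<in> span F" "strict_mono r" "(y \<circ> r) \<longlonglongrightarrow> l'"
      using insert.IH[of y] convergent_imp_bounded by blast
    moreover have "(y \<circ> r) \<longlonglongrightarrow> l" using y \<open>strict_mono r\<close> LIMSEQ_subseq_LIMSEQ by blast
    ultimately show "l \<in> span F" using LIMSEQ_unique by metis
  qed
  show ?case
  proof (cases "a \<in> span F")
    case True
    then show ?thesis using insert.IH insert.prems by (simp add: span_redundant)
  next
    case False
    define \<delta> where "\<delta> = infdist a (span F)"
    have \<delta>: "\<delta> > 0" unfolding \<delta>_def
      using infdist_pos_not_in_closed[OF closed_span_F _ False] span_zero by blast
    obtain R where R: "\<And>n. norm (x n) \<le> R"
      using insert.prems(2) by (meson bounded_iff rangeI)
    have "\<forall>n. \<exists>c. x n - c *\<^sub>R a \<in> span F"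
      using insert.prems(1) span_breakdown_eq by blast
    then obtain c where c: "\<And>n. x n - c n *\<^sub>R a \<in> span F" by metis
    text \<open>a has positive distance from the closed subspace span F, which bounds the a-coordinates.\<close>
    have c_bound: "\<bar>c n\<bar> \<le> R / \<delta>" for n
      using abs_mult_infdist_le_norm[OF subspace_span c, of n] R[of n] \<delta>
      unfolding \<delta>_def by (simp add: pos_le_divide_eq)
    obtain l1 and r1 :: "nat \<Rightarrow> nat" where l1: "strict_mono r1" "(c \<circ> r1) \<longlonglongrightarrow> l1"
      using compact_imp_seq_compact[OF compact_cball[of 0 "R / \<delta>"]] c_bound
      unfolding seq_compact_def by (metis mem_cball_0 real_norm_def)
    define s where "s = (\<lambda>n. x (r1 n) - c (r1 n) *\<^sub>R a)"
    have "norm (s n) \<le> R + R / \<delta> * norm a" for n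
    proof -
      have "norm (s n) \<le> norm (x (r1 n)) + \<bar>c (r1 n)\<bar> * norm a"
        unfolding s_def by (metis norm_scaleR norm_triangle_ineq4)
      also have "\<dots> \<le> R + R / \<delta> * norm a"
        by (intro add_mono R mult_right_mono c_bound) auto
      finally show ?thesis .
    qed
    then have "bounded (range s)" by (auto simp: bounded_iff)
    moreover have "range s \<subseteq> span F" using c s_def by auto
    ultimately obtain l2 r2 where l2: "l2 \<in> span F" "strict_mono r2" "(s \<circ> r2) \<longlonglongrightarrow> l2"
      using insert.IH by blast
    have "(\<lambda>n. (s \<circ> r2) n + ((c \<circ> r1) \<circ> r2) n *\<^sub>R a) \<longlonglongrightarrow> l2 + l1 *\<^sub>R a"
      using LIMSEQ_subseq_LIMSEQ[OF l1(2) l2(2)] l2(3) by (intro tendsto_intros)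
    moreover have "(\<lambda>n. (s \<circ> r2) n + ((c \<circ> r1) \<circ> r2) n *\<^sub>R a) = x \<circ> (r1 \<circ> r2)"
      by (auto simp: s_def)
    moreover have "l2 + l1 *\<^sub>R a \<in> span (insert a F)"
      using l2(1) by (meson span_add span_base span_mono span_scale insertI1 subset_insertI subsetD)
    moreover have "strict_mono (r1 \<circ> r2)" using l1(1) l2(2) strict_mono_o by blast
    ultimately show ?thesis by metis
  qed
qed

lemma compact_if_finite_span_UNIV:
  fixes S C :: "'b::real_normed_vector set"
  assumes "finite S" "span S = UNIV" "bounded C" "closed C"
  shows "compact C"
  unfolding compact_eq_seq_compact_metric seq_compact_def
proof (intro allI impI)
  fix x :: "nat \<Rightarrow> 'b" assume x: "\<forall>n. x n \<in> C"
  then have "bounded (range x)" using assms(3) by (metis bounded_subset image_subsetI)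
  then obtain l r where "strict_mono r" "(x \<circ> r) \<longlonglongrightarrow> l"
    using bounded_seq_in_finite_span_has_convergent_subseq[OF assms(1)] assms(2) by blast
  moreover then have "l \<in> C"
    using x assms(4) closed_sequentially[of C "x \<circ> r" l] by auto
  ultimately show "\<exists>l\<in>C. \<exists>r. strict_mono r \<and> (x \<circ> r) \<longlonglongrightarrow> l" by blast
qed

section \<open>Growth families and weighted sup-norms\<close>

lemma growth_family_ge_1: "growth_family \<omega> \<Longrightarrow> real (\<omega> k n) \<ge> 1"
  unfolding growth_family_def by auto

lemma growth_family_mono:
  assumes "growth_family \<omega>" "k \<le> k'"
  shows "\<omega> k n \<le> \<omega> k' n"
  using lift_Suc_mono_le[of "\<lambda>k. \<omega> k n", OF _ assms(2)] assms(1)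
  unfolding growth_family_def by blast

lemma growth_family_doubling_subseq:
  assumes "growth_family \<omega>"
  obtains \<kappa> :: "nat \<Rightarrow> nat"
  where "strict_mono \<kappa>" "\<And>n m. 2 ^ m * \<omega> (\<kappa> n) m \<le> \<omega> (\<kappa> (Suc n)) m"
proof -
  obtain g where g: "\<And>k. k \<le> g k" "\<And>k m. 2 ^ m * \<omega> k m \<le> \<omega> (g k) m"
    using assms unfolding growth_family_def by metis
  define \<kappa> where "\<kappa> = rec_nat 0 (\<lambda>_ k. Suc (g k))"
  have \<kappa>_Suc: "\<kappa> (Suc n) = Suc (g (\<kappa> n))" for n by (simp add: \<kappa>_def)
  show ?thesis
  proof
    show "strict_mono \<kappa>"
      unfolding strict_mono_Suc_iff \<kappa>_Suc using g(1) le_imp_less_Suc by blast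
    show "2 ^ m * \<omega> (\<kappa> n) m \<le> \<omega> (\<kappa> (Suc n)) m" for n m
      using g(2) growth_family_mono[OF assms, of "g (\<kappa> n)" "\<kappa> (Suc n)" m]
      unfolding \<kappa>_Suc by (meson le_SucI order_refl order_trans)
  qed
qed

lemma norm_le_wnorm:
  assumes "growth_family \<omega>" "f \<in> lk \<omega> d k"
  shows "norm (f \<tau>) \<le> wnorm \<omega> d k f * \<omega> k (d \<tau>)"
proof -
  have "norm (f \<tau>) / real (\<omega> k (d \<tau>)) \<le> wnorm \<omega> d k f"
    unfolding wnorm_def using assms(2) unfolding lk_def by (auto intro: cSUP_upper)
  then show ?thesis using growth_family_ge_1[OF assms(1), of k "d \<tau>"] by (simp add: field_simps)
qed

lemma lk_wnorm_le:
  assumes "growth_family \<omega>" "\<And>\<tau>. norm (f \<tau>) \<le> C * real (\<omega> k (d \<tau>))"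
  shows "f \<in> lk \<omega> d k" "wnorm \<omega> d k f \<le> C"
proof -
  have bound: "norm (f \<tau>) / real (\<omega> k (d \<tau>)) \<le> C" for \<tau>
    using assms(2)[of \<tau>] growth_family_ge_1[OF assms(1), of k "d \<tau>"] by (simp add: field_simps)
  then show "f \<in> lk \<omega> d k" unfolding lk_def bdd_above_def by auto
  show "wnorm \<omega> d k f \<le> C" unfolding wnorm_def using bound by (intro cSUP_least) auto
qed

lemma wnorm_nonneg:
  assumes "growth_family \<omega>" "f \<in> lk \<omega> d k"
  shows "wnorm \<omega> d k f \<ge> 0"
  using norm_le_wnorm[OF assms, of undefined] growth_family_ge_1[OF assms(1), of k "d undefined"]
  by (smt (verit) norm_ge_zero zero_le_mult_iff)

lemma lk_lincomb:
  assumes "growth_family \<omega>" "f \<in> lk \<omega> d k" "g \<in> lk \<omega> d k"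
  shows "(\<lambda>\<tau>. a *\<^sub>R f \<tau> + b *\<^sub>R g \<tau>) \<in> lk \<omega> d k"
proof (rule lk_wnorm_le(1)[OF assms(1)])
  fix \<tau>
  have "norm (a *\<^sub>R f \<tau> + b *\<^sub>R g \<tau>) \<le> \<bar>a\<bar> * norm (f \<tau>) + \<bar>b\<bar> * norm (g \<tau>)"
    by (metis norm_scaleR norm_triangle_ineq)
  also have "\<dots> \<le> \<bar>a\<bar> * (wnorm \<omega> d k f * \<omega> k (d \<tau>)) + \<bar>b\<bar> * (wnorm \<omega> d k g * \<omega> k (d \<tau>))"
    by (intro add_mono mult_left_mono norm_le_wnorm assms) auto
  finally show "norm (a *\<^sub>R f \<tau> + b *\<^sub>R g \<tau>)
      \<le> (\<bar>a\<bar> * wnorm \<omega> d k f + \<bar>b\<bar> * wnorm \<omega> d k g) * \<omega> k (d \<tau>)"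
    by (simp add: algebra_simps)
qed

lemma lk_diff:
  assumes "growth_family \<omega>" "f \<in> lk \<omega> d k" "g \<in> lk \<omega> d k"
  shows "(\<lambda>\<tau>. f \<tau> - g \<tau>) \<in> lk \<omega> d k"
  using lk_lincomb[OF assms, of 1 "-1"] by simp

lemma lk_mono:
  assumes "growth_family \<omega>" "k \<le> k'" "f \<in> lk \<omega> d k"
  shows "f \<in> lk \<omega> d k'" "wnorm \<omega> d k' f \<le> wnorm \<omega> d k f"
proof -
  have "norm (f \<tau>) \<le> wnorm \<omega> d k f * \<omega> k' (d \<tau>)" for \<tau>
    using norm_le_wnorm[OF assms(1,3), of \<tau>] growth_family_mono[OF assms(1,2), of "d \<tau>"]
      wnorm_nonneg[OF assms(1,3)]
    by (meson mult_left_mono of_nat_le_iff order_trans)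
  then show "f \<in> lk \<omega> d k'" "wnorm \<omega> d k' f \<le> wnorm \<omega> d k f"
    using lk_wnorm_le[OF assms(1)] by blast+
qed

abbreviation lk_union :: "(nat \<Rightarrow> nat \<Rightarrow> nat) \<Rightarrow> ('j \<Rightarrow> nat) \<Rightarrow> ('j \<Rightarrow> 'b::real_normed_vector) set"
  where "lk_union \<omega> d \<equiv> \<Union>k. lk \<omega> d k"

lemma lk_union_lincomb:
  assumes "growth_family \<omega>" "f \<in> lk_union \<omega> d" "g \<in> lk_union \<omega> d"
  shows "(\<lambda>\<tau>. a *\<^sub>R f \<tau> + b *\<^sub>R g \<tau>) \<in> lk_union \<omega> d"
proof -
  obtain k1 k2 where "f \<in> lk \<omega> d k1" "g \<in> lk \<omega> d k2" using assms(2,3) by blast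
  then have "f \<in> lk \<omega> d (max k1 k2)" "g \<in> lk \<omega> d (max k1 k2)"
    using lk_mono(1)[OF assms(1)] by (metis max.cobounded1 max.cobounded2)+
  then have "(\<lambda>\<tau>. a *\<^sub>R f \<tau> + b *\<^sub>R g \<tau>) \<in> lk \<omega> d (max k1 k2)"
    by (rule lk_lincomb[OF assms(1)])
  then show ?thesis by blast
qed

lemma lk_union_add:
  assumes "growth_family \<omega>" "f \<in> lk_union \<omega> d" "g \<in> lk_union \<omega> d"
  shows "(\<lambda>\<tau>. f \<tau> + g \<tau>) \<in> lk_union \<omega> d"
  using lk_union_lincomb[OF assms, of 1 1] by simp

lemma lk_union_diff:
  assumes "growth_family \<omega>" "f \<in> lk_union \<omega> d" "g \<in> lk_union \<omega> d"
  shows "(\<lambda>\<tau>. f \<tau> - g \<tau>) \<in> lk_union \<omega> d"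
  using lk_union_lincomb[OF assms, of 1 "-1"] by simp

lemma abs_convex_lk_union: "growth_family \<omega> \<Longrightarrow> abs_convex (lk_union \<omega> d)"
  unfolding abs_convex_def by (intro ballI allI impI lk_union_lincomb)

section \<open>The step topologies and the direct limit topology\<close>

lemma openin_step_top:
  "openin (step_top \<omega> d k) U \<longleftrightarrow> U \<subseteq> lk \<omega> d k \<and>
     (\<forall>f\<in>U. \<exists>e>0. {g \<in> lk \<omega> d k. wnorm \<omega> d k (\<lambda>\<tau>. g \<tau> - f \<tau>) < e} \<subseteq> U)"
  (is "_ \<longleftrightarrow> ?open U")
proof -
  have "istopology ?open"
    unfolding istopology_def
  proof (rule conjI; intro allI impI)
    fix S T assume S: "?open S" and T: "?open T"
    show "?open (S \<inter> T)"
    proof (intro conjI ballI)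
      show "S \<inter> T \<subseteq> lk \<omega> d k" using S by blast
      fix f assume f: "f \<in> S \<inter> T"
      obtain e1 where "e1 > 0" "{g \<in> lk \<omega> d k. wnorm \<omega> d k (\<lambda>\<tau>. g \<tau> - f \<tau>) < e1} \<subseteq> S"
        using bspec[OF conjunct2[OF S] IntD1[OF f]] by blast
      moreover obtain e2 where "e2 > 0" "{g \<in> lk \<omega> d k. wnorm \<omega> d k (\<lambda>\<tau>. g \<tau> - f \<tau>) < e2} \<subseteq> T"
        using bspec[OF conjunct2[OF T] IntD2[OF f]] by blast
      ultimately show "\<exists>e>0. {g \<in> lk \<omega> d k. wnorm \<omega> d k (\<lambda>\<tau>. g \<tau> - f \<tau>) < e} \<subseteq> S \<inter> T"
        by (intro exI[of _ "min e1 e2"]) auto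
    qed
  next
    fix \<U> assume \<U>: "\<forall>S\<in>\<U>. ?open S"
    show "?open (\<Union>\<U>)"
    proof (intro conjI ballI)
      show "\<Union>\<U> \<subseteq> lk \<omega> d k" using \<U> by blast
      fix f assume "f \<in> \<Union>\<U>"
      then obtain S where S: "S \<in> \<U>" "f \<in> S" by blast
      obtain e where "e > 0" "{g \<in> lk \<omega> d k. wnorm \<omega> d k (\<lambda>\<tau>. g \<tau> - f \<tau>) < e} \<subseteq> S"
        using bspec[OF conjunct2[OF bspec[OF \<U> S(1)]] S(2)] by blast
      then show "\<exists>e>0. {g \<in> lk \<omega> d k. wnorm \<omega> d k (\<lambda>\<tau>. g \<tau> - f \<tau>) < e} \<subseteq> \<Union>\<U>"
        using S(1) by blast
    qed
  qed
  then show ?thesis by (simp only: step_top_def topology_inverse')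
qed

lemma topspace_step_top: "topspace (step_top \<omega> d k) = lk \<omega> d k"
proof
  show "topspace (step_top \<omega> d k) \<subseteq> lk \<omega> d k"
    using openin_topspace[of "step_top \<omega> d k"] unfolding openin_step_top by blast
  have "openin (step_top \<omega> d k) (lk \<omega> d k)"
    unfolding openin_step_top by (intro conjI ballI exI[of _ 1]) auto
  then show "lk \<omega> d k \<subseteq> topspace (step_top \<omega> d k)" by (rule openin_subset)
qed

lemma openin_dl_top:
  "openin (dl_top \<omega> d UNIV) U \<longleftrightarrow> U \<subseteq> lk_union \<omega> d \<and>
     (\<forall>f\<in>U. \<exists>V. abs_convex V \<and> V \<subseteq> lk_union \<omega> d \<and>
        (\<forall>k. \<exists>e>0. {g \<in> lk \<omega> d k. wnorm \<omega> d k g < e} \<subseteq> V) \<and>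
        (\<forall>v\<in>V. (\<lambda>\<tau>. f \<tau> + v \<tau>) \<in> U))"
  (is "_ \<longleftrightarrow> ?open U")
proof -
  have "istopology ?open"
    unfolding istopology_def
  proof (rule conjI; intro allI impI)
    fix S T assume S: "?open S" and T: "?open T"
    show "?open (S \<inter> T)"
    proof (intro conjI ballI)
      show "S \<inter> T \<subseteq> lk_union \<omega> d" using S by blast
      fix f assume f: "f \<in> S \<inter> T"
      obtain V1 where V1: "abs_convex V1" "V1 \<subseteq> lk_union \<omega> d"
          "\<forall>k. \<exists>e>0. {g \<in> lk \<omega> d k. wnorm \<omega> d k g < e} \<subseteq> V1" "\<forall>v\<in>V1. (\<lambda>\<tau>. f \<tau> + v \<tau>) \<in> S"
        using bspec[OF conjunct2[OF S] IntD1[OF f]] by blast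
      obtain V2 where V2: "abs_convex V2"
          "\<forall>k. \<exists>e>0. {g \<in> lk \<omega> d k. wnorm \<omega> d k g < e} \<subseteq> V2" "\<forall>v\<in>V2. (\<lambda>\<tau>. f \<tau> + v \<tau>) \<in> T"
        using bspec[OF conjunct2[OF T] IntD2[OF f]] by blast
      have "\<exists>e>0. {g \<in> lk \<omega> d k. wnorm \<omega> d k g < e} \<subseteq> V1 \<inter> V2" for k
      proof -
        obtain e1 e2 where "e1 > 0" "e2 > 0" "{g \<in> lk \<omega> d k. wnorm \<omega> d k g < e1} \<subseteq> V1"
          "{g \<in> lk \<omega> d k. wnorm \<omega> d k g < e2} \<subseteq> V2" using V1(3) V2(2) by blast
        then show ?thesis by (intro exI[of _ "min e1 e2"]) auto
      qed
      moreover have "abs_convex (V1 \<inter> V2)" using V1(1) V2(1) unfolding abs_convex_def by simp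
      ultimately show "\<exists>V. abs_convex V \<and> V \<subseteq> lk_union \<omega> d \<and>
          (\<forall>k. \<exists>e>0. {g \<in> lk \<omega> d k. wnorm \<omega> d k g < e} \<subseteq> V) \<and> (\<forall>v\<in>V. (\<lambda>\<tau>. f \<tau> + v \<tau>) \<in> S \<inter> T)"
        using V1(2,4) V2(3) by (intro exI[of _ "V1 \<inter> V2"]) blast
    qed
  next
    fix \<U> assume \<U>: "\<forall>S\<in>\<U>. ?open S"
    show "?open (\<Union>\<U>)"
    proof (intro conjI ballI)
      show "\<Union>\<U> \<subseteq> lk_union \<omega> d" using \<U> by blast
      fix f assume "f \<in> \<Union>\<U>"
      then obtain S where S: "S \<in> \<U>" "f \<in> S" by blast
      obtain V where V: "abs_convex V" "V \<subseteq> lk_union \<omega> d"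
          "\<forall>k. \<exists>e>0. {g \<in> lk \<omega> d k. wnorm \<omega> d k g < e} \<subseteq> V" "\<forall>v\<in>V. (\<lambda>\<tau>. f \<tau> + v \<tau>) \<in> S"
        using bspec[OF conjunct2[OF bspec[OF \<U> S(1)]] S(2)] by blast
      then show "\<exists>V. abs_convex V \<and> V \<subseteq> lk_union \<omega> d \<and>
          (\<forall>k. \<exists>e>0. {g \<in> lk \<omega> d k. wnorm \<omega> d k g < e} \<subseteq> V) \<and> (\<forall>v\<in>V. (\<lambda>\<tau>. f \<tau> + v \<tau>) \<in> \<Union>\<U>)"
        using S(1) by blast
    qed
  qed
  then show ?thesis by (simp only: dl_top_def ball_UNIV topology_inverse')
qed

lemma topspace_dl_top:
  assumes "growth_family \<omega>"
  shows "topspace (dl_top \<omega> d UNIV) = lk_union \<omega> d"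
proof
  show "topspace (dl_top \<omega> d UNIV) \<subseteq> lk_union \<omega> d"
    using openin_topspace[of "dl_top \<omega> d UNIV"] unfolding openin_dl_top by blast
  have "openin (dl_top \<omega> d UNIV) (lk_union \<omega> d)"
    unfolding openin_dl_top
  proof (intro conjI ballI allI exI[of _ "lk_union \<omega> d"])
    show "\<exists>e>0. {g \<in> lk \<omega> d k. wnorm \<omega> d k g < e} \<subseteq> lk_union \<omega> d" for k
      by (intro exI[of _ 1]) auto
    show "(\<lambda>\<tau>. f \<tau> + v \<tau>) \<in> lk_union \<omega> d" if "f \<in> lk_union \<omega> d" "v \<in> lk_union \<omega> d" for f v
      by (rule lk_union_add[OF assms that])
  qed (use abs_convex_lk_union[OF assms] in auto)
  then show "lk_union \<omega> d \<subseteq> topspace (dl_top \<omega> d UNIV)" by (rule openin_subset)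
qed

lemma abs_convex_sublevel:
  fixes p :: "('j \<Rightarrow> 'b::real_normed_vector) \<Rightarrow> real"
  assumes A: "abs_convex A" and s: "s > 0"
    and p_lincomb: "\<And>f g a b. f \<in> A \<Longrightarrow> g \<in> A \<Longrightarrow>
          p (\<lambda>\<tau>. a *\<^sub>R f \<tau> + b *\<^sub>R g \<tau>) \<le> \<bar>a\<bar> * p f + \<bar>b\<bar> * p g"
  shows "abs_convex {v \<in> A. p v < s}"
  unfolding abs_convex_def
proof (intro ballI allI impI)
  fix f g and a b :: real assume fg: "f \<in> {v \<in> A. p v < s}" "g \<in> {v \<in> A. p v < s}"
    and ab: "\<bar>a\<bar> + \<bar>b\<bar> \<le> 1"
  define M where "M = max (max (p f) (p g)) 0"
  have M: "p f \<le> M" "p g \<le> M" "M \<ge> 0" unfolding M_def by auto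
  have "p (\<lambda>\<tau>. a *\<^sub>R f \<tau> + b *\<^sub>R g \<tau>) \<le> \<bar>a\<bar> * p f + \<bar>b\<bar> * p g"
    using fg p_lincomb by blast
  also have "\<dots> \<le> (\<bar>a\<bar> + \<bar>b\<bar>) * M"
    using M by (simp add: distrib_right add_mono mult_left_mono)
  also have "\<dots> \<le> M" using ab M(3) by (simp add: mult_left_le_one_le)
  also have "\<dots> < s"
    using fg s unfolding M_def by auto
  finally show "(\<lambda>\<tau>. a *\<^sub>R f \<tau> + b *\<^sub>R g \<tau>) \<in> {v \<in> A. p v < s}"
    using fg ab A unfolding abs_convex_def by blast
qed

lemma openin_dl_top_seminorm_ball:
  fixes p :: "('j \<Rightarrow> 'b::real_normed_vector) \<Rightarrow> real"
  assumes gf: "growth_family \<omega>"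
    and p_lincomb: "\<And>f g a b. f \<in> lk_union \<omega> d \<Longrightarrow> g \<in> lk_union \<omega> d \<Longrightarrow>
          p (\<lambda>\<tau>. a *\<^sub>R f \<tau> + b *\<^sub>R g \<tau>) \<le> \<bar>a\<bar> * p f + \<bar>b\<bar> * p g"
    and p_bounded: "\<And>k. \<exists>C>0. \<forall>g\<in>lk \<omega> d k. p g \<le> C * wnorm \<omega> d k g"
    and f0: "f0 \<in> lk_union \<omega> d"
  shows "openin (dl_top \<omega> d UNIV) {h \<in> lk_union \<omega> d. p (\<lambda>\<tau>. h \<tau> - f0 \<tau>) < r}"
  unfolding openin_dl_top
proof (intro conjI ballI)
  fix h assume h: "h \<in> {h \<in> lk_union \<omega> d. p (\<lambda>\<tau>. h \<tau> - f0 \<tau>) < r}"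
  define s where "s = r - p (\<lambda>\<tau>. h \<tau> - f0 \<tau>)"
  have s: "s > 0" using h s_def by auto
  define V where "V = {v \<in> lk_union \<omega> d. p v < s}"
  have "abs_convex V"
    unfolding V_def by (rule abs_convex_sublevel[OF abs_convex_lk_union[OF gf] s p_lincomb])
  moreover have "\<exists>e>0. {g \<in> lk \<omega> d k. wnorm \<omega> d k g < e} \<subseteq> V" for k
  proof -
    obtain C where C: "C > 0" "\<forall>g\<in>lk \<omega> d k. p g \<le> C * wnorm \<omega> d k g"
      using p_bounded by blast
    have "p g < s" if "g \<in> lk \<omega> d k" "wnorm \<omega> d k g < s / C" for g
      using C that by (smt (verit, best) pos_less_divide_eq mult.commute)
    then show ?thesis using s C(1) unfolding V_def by (intro exI[of _ "s / C"]) auto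
  qed
  moreover have "(\<lambda>\<tau>. h \<tau> + v \<tau>) \<in> {h \<in> lk_union \<omega> d. p (\<lambda>\<tau>. h \<tau> - f0 \<tau>) < r}" if v: "v \<in> V" for v
  proof -
    have hL: "h \<in> lk_union \<omega> d" and vL: "v \<in> lk_union \<omega> d" using h v unfolding V_def by auto
    have "p (\<lambda>\<tau>. h \<tau> + v \<tau> - f0 \<tau>) = p (\<lambda>\<tau>. 1 *\<^sub>R (h \<tau> - f0 \<tau>) + 1 *\<^sub>R v \<tau>)"
      by (simp add: algebra_simps)
    also have "\<dots> \<le> p (\<lambda>\<tau>. h \<tau> - f0 \<tau>) + p v"
      using p_lincomb[OF lk_union_diff[OF gf hL f0] vL, of 1 1] by simp
    also have "\<dots> < r" using v unfolding V_def s_def by auto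
    finally show ?thesis using lk_union_add[OF gf hL vL] by simp
  qed
  ultimately show "\<exists>V. abs_convex V \<and> V \<subseteq> lk_union \<omega> d \<and>
      (\<forall>k. \<exists>e>0. {g \<in> lk \<omega> d k. wnorm \<omega> d k g < e} \<subseteq> V) \<and>
      (\<forall>v\<in>V. (\<lambda>\<tau>. h \<tau> + v \<tau>) \<in> {h \<in> lk_union \<omega> d. p (\<lambda>\<tau>. h \<tau> - f0 \<tau>) < r})"
    unfolding V_def by blast
qed blast

lemma Hausdorff_space_dl_top:
  assumes gf: "growth_family \<omega>"
  shows "Hausdorff_space (dl_top \<omega> d UNIV :: ('j \<Rightarrow> 'b::real_normed_vector) topology)"
  unfolding Hausdorff_space_def
proof (intro allI impI)
  fix x y :: "'j \<Rightarrow> 'b"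
  assume xy: "x \<in> topspace (dl_top \<omega> d UNIV) \<and> y \<in> topspace (dl_top \<omega> d UNIV) \<and> x \<noteq> y"
  then have xL: "x \<in> lk_union \<omega> d" and yL: "y \<in> lk_union \<omega> d"
    using topspace_dl_top[OF gf] by auto
  obtain t where t: "x t \<noteq> y t" using xy by auto
  define r where "r = dist (x t) (y t) / 2"
  define p where "p = (\<lambda>g::'j \<Rightarrow> 'b. norm (g t))"
  have p_lincomb: "p (\<lambda>\<tau>. a *\<^sub>R f \<tau> + b *\<^sub>R g \<tau>) \<le> \<bar>a\<bar> * p f + \<bar>b\<bar> * p g" for f g a b
    unfolding p_def using norm_triangle_ineq[of "a *\<^sub>R f t" "b *\<^sub>R g t"] by simp
  have p_bounded: "\<exists>C>0. \<forall>g\<in>lk \<omega> d k. p g \<le> C * wnorm \<omega> d k g" for k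
    using norm_le_wnorm[OF gf] growth_family_ge_1[OF gf, of k "d t"] unfolding p_def
    by (intro exI[of _ "real (\<omega> k (d t))"]) (auto simp: mult.commute)
  note ball_open = openin_dl_top_seminorm_ball[OF gf p_lincomb p_bounded]
  have "disjnt {h \<in> lk_union \<omega> d. p (\<lambda>\<tau>. h \<tau> - x \<tau>) < r} {h \<in> lk_union \<omega> d. p (\<lambda>\<tau>. h \<tau> - y \<tau>) < r}"
    unfolding disjnt_def p_def r_def
  proof safe
    fix h assume "norm (h t - x t) < dist (x t) (y t) / 2" "norm (h t - y t) < dist (x t) (y t) / 2"
    moreover have "dist (x t) (y t) \<le> norm (h t - x t) + norm (h t - y t)"
      using dist_triangle[of "x t" "y t" "h t"] by (simp add: dist_norm norm_minus_commute)
    ultimately show "h \<in> {}" by linarith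
  qed
  moreover have "r > 0" using t unfolding r_def by simp
  ultimately show "\<exists>U V. openin (dl_top \<omega> d UNIV) U \<and> openin (dl_top \<omega> d UNIV) V \<and>
      x \<in> U \<and> y \<in> V \<and> disjnt U V"
    using ball_open[OF xL] ball_open[OF yL] xL yL unfolding p_def
    by (intro exI conjI) (auto simp del: UN_iff)
qed

lemma continuous_map_step_top_dl_top:
  assumes gf: "growth_family \<omega>"
  shows "continuous_map (step_top \<omega> d k) (dl_top \<omega> d UNIV) id"
  unfolding continuous_map_def topspace_step_top topspace_dl_top[OF gf]
proof (intro conjI allI impI)
  show "id \<in> lk \<omega> d k \<rightarrow> lk_union \<omega> d" by auto
  fix U assume "openin (dl_top \<omega> d UNIV) U"
  then have U: "U \<subseteq> lk_union \<omega> d" "\<forall>f\<in>U. \<exists>V. abs_convex V \<and> V \<subseteq> lk_union \<omega> d \<and>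
        (\<forall>k. \<exists>e>0. {g \<in> lk \<omega> d k. wnorm \<omega> d k g < e} \<subseteq> V) \<and> (\<forall>v\<in>V. (\<lambda>\<tau>. f \<tau> + v \<tau>) \<in> U)"
    unfolding openin_dl_top by auto
  show "openin (step_top \<omega> d k) {f \<in> lk \<omega> d k. id f \<in> U}"
    unfolding openin_step_top
  proof (intro conjI ballI)
    fix f assume f: "f \<in> {f \<in> lk \<omega> d k. id f \<in> U}"
    have "f \<in> U" using f by simp
    then obtain V where V: "\<forall>k. \<exists>e>0. {g \<in> lk \<omega> d k. wnorm \<omega> d k g < e} \<subseteq> V"
        "\<forall>v\<in>V. (\<lambda>\<tau>. f \<tau> + v \<tau>) \<in> U"
      using U(2) by blast
    obtain e where e: "e > 0" "{g \<in> lk \<omega> d k. wnorm \<omega> d k g < e} \<subseteq> V" using V(1) by blast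
    have "g \<in> U" if "g \<in> lk \<omega> d k" "wnorm \<omega> d k (\<lambda>\<tau>. g \<tau> - f \<tau>) < e" for g
    proof -
      have "(\<lambda>\<tau>. g \<tau> - f \<tau>) \<in> V" using e(2) lk_diff[OF gf that(1)] f that(2) by auto
      then show ?thesis using V(2) by fastforce
    qed
    then show "\<exists>e>0. {g \<in> lk \<omega> d k. wnorm \<omega> d k (\<lambda>\<tau>. g \<tau> - f \<tau>) < e} \<subseteq> {f \<in> lk \<omega> d k. id f \<in> U}"
      using e(1) by auto
  qed auto
qed

lemma dl_top_cofinal:
  assumes gf: "growth_family \<omega>" and cofinal: "\<And>k. \<exists>k'\<in>I. k \<le> k'"
  shows "dl_top \<omega> d I = dl_top \<omega> d UNIV"
proof -
  have union_eq: "(\<Union>k\<in>I. lk \<omega> d k) = lk_union \<omega> d"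
    using cofinal lk_mono(1)[OF gf] by blast
  have small_balls_iff: "(\<forall>k\<in>I. \<exists>e>0. {g \<in> lk \<omega> d k. wnorm \<omega> d k g < e} \<subseteq> V) \<longleftrightarrow>
        (\<forall>k. \<exists>e>0. {g \<in> lk \<omega> d k. wnorm \<omega> d k g < e} \<subseteq> V)" for V
  proof
    assume small_balls: "\<forall>k\<in>I. \<exists>e>0. {g \<in> lk \<omega> d k. wnorm \<omega> d k g < e} \<subseteq> V"
    show "\<forall>k. \<exists>e>0. {g \<in> lk \<omega> d k. wnorm \<omega> d k g < e} \<subseteq> V"
    proof
      fix k
      obtain k' where k': "k' \<in> I" "k \<le> k'" using cofinal by blast
      then obtain e where e: "e > 0" "{g \<in> lk \<omega> d k'. wnorm \<omega> d k' g < e} \<subseteq> V"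
        using small_balls by blast
      have "{g \<in> lk \<omega> d k. wnorm \<omega> d k g < e} \<subseteq> V"
        using e(2) lk_mono[OF gf k'(2)] by fastforce
      then show "\<exists>e>0. {g \<in> lk \<omega> d k. wnorm \<omega> d k g < e} \<subseteq> V" using e(1) by blast
    qed
  qed blast
  show ?thesis by (simp only: dl_top_def union_eq small_balls_iff ball_UNIV)
qed

section \<open>Compactness of weighted balls in later steps\<close>

definition weighted_ball :: "(nat \<Rightarrow> nat \<Rightarrow> nat) \<Rightarrow> ('j \<Rightarrow> nat) \<Rightarrow> nat \<Rightarrow> real \<Rightarrow> ('j \<Rightarrow> 'b::real_normed_vector) set"
  where "weighted_ball \<omega> d k M = {f. \<forall>\<tau>. norm (f \<tau>) \<le> M * \<omega> k (d \<tau>)}"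

lemma wnorm_ball_subset_weighted_ball:
  assumes "growth_family \<omega>"
  shows "{f \<in> lk \<omega> d k. wnorm \<omega> d k f \<le> M} \<subseteq> weighted_ball \<omega> d k M"
  unfolding weighted_ball_def
  using norm_le_wnorm[OF assms] mult_right_mono[of _ M "real (\<omega> k _)"] by (fastforce intro: order_trans)

lemma finite_type_grading_finite_less:
  assumes "finite_type_grading d"
  shows "finite {\<tau>. d \<tau> < N}"
proof -
  have "{\<tau>. d \<tau> < N} = (\<Union>n<N. {\<tau>. d \<tau> = n})" by auto
  then show ?thesis using assms unfolding finite_type_grading_def by auto
qed

lemma doubling_weight_tail:
  fixes \<omega> :: "nat \<Rightarrow> nat \<Rightarrow> nat" and M e :: real
  assumes "2 ^ n * \<omega> k n \<le> \<omega> k' n" "4 * M \<le> e * 2 ^ n" "e > 0"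
  shows "2 * M * \<omega> k n \<le> e / 2 * \<omega> k' n"
proof -
  have "4 * M * \<omega> k n \<le> e * 2 ^ n * \<omega> k n" using assms(2) by (rule mult_right_mono) simp
  also have "\<dots> = e * real (2 ^ n * \<omega> k n)" by simp
  also have "\<dots> \<le> e * \<omega> k' n" using assms(1,3) by (intro mult_left_mono) (simp_all only: of_nat_le_iff)
  finally show ?thesis by simp
qed

lemma weighted_ball_subset_lk:
  assumes gf: "growth_family \<omega>" and le: "\<And>n. \<omega> k n \<le> \<omega> k' n" and M: "M \<ge> 0"
  shows "weighted_ball \<omega> d k M \<subseteq> lk \<omega> d k'"
proof
  fix f assume f: "f \<in> weighted_ball \<omega> d k M"
  have "norm (f \<tau>) \<le> M * \<omega> k' (d \<tau>)" for \<tau>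
  proof -
    have "norm (f \<tau>) \<le> M * \<omega> k (d \<tau>)" using f unfolding weighted_ball_def by blast
    also have "\<dots> \<le> M * \<omega> k' (d \<tau>)" using le M by (simp add: mult_left_mono)
    finally show ?thesis .
  qed
  then show "f \<in> lk \<omega> d k'" by (rule lk_wnorm_le(1)[OF gf])
qed

lemma wnorm_diff_le_if_close_at_low_degrees:
  fixes f g :: "'j \<Rightarrow> 'b::real_normed_vector"
  assumes gf: "growth_family \<omega>" and doubling: "\<And>n. 2 ^ n * \<omega> k n \<le> \<omega> k' n"
    and fg: "f \<in> weighted_ball \<omega> d k M" "g \<in> weighted_ball \<omega> d k M"
    and e: "e > 0" "4 * M < e * 2 ^ N"
    and close: "\<And>\<tau>. d \<tau> < N \<Longrightarrow> norm (g \<tau> - f \<tau>) < e / 2"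
  shows "wnorm \<omega> d k' (\<lambda>\<tau>. g \<tau> - f \<tau>) \<le> e / 2"
proof (rule lk_wnorm_le(2)[OF gf])
  fix \<tau>
  show "norm (g \<tau> - f \<tau>) \<le> e / 2 * \<omega> k' (d \<tau>)"
  proof (cases "d \<tau> < N")
    case True
    have "e / 2 \<le> e / 2 * \<omega> k' (d \<tau>)"
      using growth_family_ge_1[OF gf, of k' "d \<tau>"] e(1) by (simp add: mult_le_cancel_left1)
    then show ?thesis using close[OF True] by linarith
  next
    case False
    have "4 * M \<le> e * 2 ^ d \<tau>"
      using e False order_trans[OF less_imp_le[OF e(2)] mult_left_mono[OF power_increasing]] by simp
    then have "2 * M * \<omega> k (d \<tau>) \<le> e / 2 * \<omega> k' (d \<tau>)"
      by (rule doubling_weight_tail[where \<omega> = \<omega>, OF doubling _ e(1)])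
    moreover have "norm (g \<tau>) \<le> M * \<omega> k (d \<tau>)" "norm (f \<tau>) \<le> M * \<omega> k (d \<tau>)"
      using fg unfolding weighted_ball_def by auto
    ultimately show ?thesis using norm_triangle_ineq4[of "g \<tau>" "f \<tau>"] by linarith
  qed
qed

lemma continuous_map_weighted_ball_step_top:
  fixes d :: "'j \<Rightarrow> nat"
  assumes gf: "growth_family \<omega>" and ft: "finite_type_grading d"
    and doubling: "\<And>n. 2 ^ n * \<omega> k n \<le> \<omega> k' n" and M: "M \<ge> 0"
  defines "W \<equiv> weighted_ball \<omega> d k M :: ('j \<Rightarrow> 'b::real_normed_vector) set"
  shows "continuous_map (subtopology (product_topology (\<lambda>_. euclidean) UNIV) W) (step_top \<omega> d k') id"
  unfolding continuous_map_def
proof (intro conjI allI impI)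
  have W_lk: "W \<subseteq> lk \<omega> d k'"
    unfolding W_def using doubling by (intro weighted_ball_subset_lk[OF gf _ M] order_trans[OF _ doubling]) simp
  then show "id \<in> topspace (subtopology (product_topology (\<lambda>_. euclidean) UNIV) W) \<rightarrow> topspace (step_top \<omega> d k')"
    by (auto simp: topspace_step_top)
  fix U :: "('j \<Rightarrow> 'b) set" assume U: "openin (step_top \<omega> d k') U"
  show "openin (subtopology (product_topology (\<lambda>_. euclidean) UNIV) W)
      {x \<in> topspace (subtopology (product_topology (\<lambda>_. euclidean) UNIV) W). id x \<in> U}"
  proof (subst openin_subopen, intro ballI)
    fix f assume "f \<in> {x \<in> topspace (subtopology (product_topology (\<lambda>_. euclidean) UNIV) W). id x \<in> U}"
    then have fW: "f \<in> W" and fU: "f \<in> U" by auto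
    obtain e where e: "e > 0" "{g \<in> lk \<omega> d k'. wnorm \<omega> d k' (\<lambda>\<tau>. g \<tau> - f \<tau>) < e} \<subseteq> U"
      using U fU unfolding openin_step_top by blast
    obtain N where "4 * M / e < 2 ^ N" using real_arch_pow[of 2] by auto
    then have N: "4 * M < e * 2 ^ N" using e(1) by (simp add: pos_divide_less_eq mult.commute)
    text \<open>Beyond degree N the doubling of the weights makes W uniformly small in step k',
      so only the finitely many coordinates of degree below N need to be controlled.\<close>
    define T where "T = PiE UNIV (\<lambda>\<tau>. if d \<tau> < N then ball (f \<tau>) (e/2) else (UNIV::'b set))"
    have "openin (product_topology (\<lambda>_. euclidean) UNIV) T"
      unfolding T_def openin_PiE_gen
    proof (rule disjI2, intro conjI)
      show "finite {\<tau> \<in> UNIV. (if d \<tau> < N then ball (f \<tau>) (e / 2) else UNIV) \<noteq> topspace euclidean}"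
        by (rule finite_subset[OF _ finite_type_grading_finite_less[OF ft, of N]]) auto
    qed auto
    moreover have "f \<in> T" unfolding T_def using e by auto
    moreover have "g \<in> U" if g: "g \<in> T" "g \<in> W" for g
    proof -
      have "norm (g \<tau> - f \<tau>) < e / 2" if "d \<tau> < N" for \<tau>
        using PiE_mem[OF g(1)[unfolded T_def] UNIV_I, of \<tau>] that
        by (simp add: dist_norm norm_minus_commute)
      then have "wnorm \<omega> d k' (\<lambda>\<tau>. g \<tau> - f \<tau>) \<le> e / 2"
        using fW g(2) unfolding W_def
        by (intro wnorm_diff_le_if_close_at_low_degrees[OF gf doubling _ _ e(1) N])
      then show "g \<in> U" using e g(2) W_lk by auto
    qed
    ultimately show "\<exists>T. openin (subtopology (product_topology (\<lambda>_. euclidean) UNIV) W) T \<and> f \<in> T \<and>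
        T \<subseteq> {x \<in> topspace (subtopology (product_topology (\<lambda>_. euclidean) UNIV) W). id x \<in> U}"
      using fW by (intro exI[of _ "T \<inter> W"]) (auto simp: openin_subtopology_Int)
  qed
qed

lemma compactin_step_top_weighted_ball:
  fixes d :: "'j \<Rightarrow> nat" and S :: "'b::real_normed_vector set"
  assumes gf: "growth_family \<omega>" and ft: "finite_type_grading d"
    and S: "finite S" "span S = UNIV"
    and doubling: "\<And>n. 2 ^ n * \<omega> k n \<le> \<omega> k' n" and M: "M \<ge> 0"
  shows "compactin (step_top \<omega> d k') (weighted_ball \<omega> d k M :: ('j \<Rightarrow> 'b) set)"
proof -
  have "weighted_ball \<omega> d k M = PiE UNIV (\<lambda>\<tau>. cball (0::'b) (M * \<omega> k (d \<tau>)))"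
    unfolding weighted_ball_def by (auto simp: PiE_def Pi_def)
  then have "compactin (product_topology (\<lambda>_. euclidean) UNIV) (weighted_ball \<omega> d k M :: ('j \<Rightarrow> 'b) set)"
    by (simp add: compactin_PiE compact_if_finite_span_UNIV[OF S bounded_cball closed_cball])
  then have "compactin (subtopology (product_topology (\<lambda>_. euclidean) UNIV) (weighted_ball \<omega> d k M))
      (weighted_ball \<omega> d k M :: ('j \<Rightarrow> 'b) set)"
    by (simp add: compactin_subtopology)
  from image_compactin[OF this continuous_map_weighted_ball_step_top[OF gf ft doubling M]]
  show ?thesis by simp
qed

section \<open>Compact subsets of the direct limit\<close>

lemma compactin_subset_incseq_openin:
  fixes U :: "nat \<Rightarrow> 'a set"
  assumes "compactin X K" "\<And>m. openin X (U m)" "incseq U" "K \<subseteq> (\<Union>m. U m)"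
  shows "\<exists>m. K \<subseteq> U m"
proof -
  have "(\<forall>V\<in>range U. openin X V) \<and> K \<subseteq> \<Union>(range U)" using assms(2,4) by blast
  then obtain \<F> where \<F>: "finite \<F>" "\<F> \<subseteq> range U" "K \<subseteq> \<Union>\<F>"
    using conjunct2[OF assms(1)[unfolded compactin_def], rule_format, of "range U"] by blast
  then obtain M where M: "finite M" "\<F> = U ` M"
    using finite_subset_image[OF \<F>(1,2)] by blast
  obtain m where "\<forall>i\<in>M. i \<le> m" using M(1) finite_nat_set_iff_bounded_le by blast
  then have "\<Union>\<F> \<subseteq> U m" using M(2) assms(3) by (auto simp: incseq_def)
  then show ?thesis using \<F>(3) by blast
qed

lemma zero_in_lk_union: "growth_family \<omega> \<Longrightarrow> (\<lambda>_. 0) \<in> lk_union \<omega> d"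
  using lk_wnorm_le(1)[of \<omega> "\<lambda>_. 0" 0 0 d] by auto

text \<open>Weights for which the weighted supremum is a continuous seminorm on the direct limit.\<close>
definition dominating_weight :: "(nat \<Rightarrow> nat \<Rightarrow> nat) \<Rightarrow> ('j \<Rightarrow> nat) \<Rightarrow> ('j \<Rightarrow> real) \<Rightarrow> bool"
  where "dominating_weight \<omega> d c \<longleftrightarrow> (\<forall>\<tau>. c \<tau> > 0) \<and> (\<forall>k. \<exists>\<delta>>(0::real). \<forall>\<tau>. \<delta> * \<omega> k (d \<tau>) \<le> c \<tau>)"

definition weighted_sup :: "('j \<Rightarrow> real) \<Rightarrow> ('j \<Rightarrow> 'b::real_normed_vector) \<Rightarrow> real"
  where "weighted_sup c g = (SUP \<tau>. norm (g \<tau>) / c \<tau>)"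

lemma norm_div_weight_le_wnorm:
  fixes \<delta> :: real
  assumes gf: "growth_family \<omega>" and g: "g \<in> lk \<omega> d k"
    and \<delta>: "\<delta> > 0" "\<forall>\<tau>. \<delta> * \<omega> k (d \<tau>) \<le> c \<tau>" and c: "c \<tau> > 0"
  shows "norm (g \<tau>) / c \<tau> \<le> wnorm \<omega> d k g / \<delta>"
proof -
  have "norm (g \<tau>) * \<delta> \<le> wnorm \<omega> d k g * \<omega> k (d \<tau>) * \<delta>"
    using norm_le_wnorm[OF gf g] \<delta>(1) by (simp add: mult_right_mono)
  also have "\<dots> = wnorm \<omega> d k g * (\<delta> * \<omega> k (d \<tau>))" by simp
  also have "\<dots> \<le> wnorm \<omega> d k g * c \<tau>"
    using wnorm_nonneg[OF gf g] \<delta>(2) by (simp add: mult_left_mono)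
  finally show ?thesis using c \<delta>(1) by (simp add: field_simps)
qed

lemma norm_div_weight_le_weighted_sup:
  assumes gf: "growth_family \<omega>" and c: "dominating_weight \<omega> d c" and g: "g \<in> lk_union \<omega> d"
  shows "norm (g \<tau>) / c \<tau> \<le> weighted_sup c g"
proof -
  obtain k where k: "g \<in> lk \<omega> d k" using g by blast
  obtain \<delta> :: real where "\<delta> > 0" "\<forall>\<tau>. \<delta> * \<omega> k (d \<tau>) \<le> c \<tau>"
    using c unfolding dominating_weight_def by blast
  then have "bdd_above (range (\<lambda>\<tau>. norm (g \<tau>) / c \<tau>))"
    using norm_div_weight_le_wnorm[OF gf k] c unfolding bdd_above_def dominating_weight_def by blast
  then show ?thesis unfolding weighted_sup_def by (rule cSUP_upper[OF UNIV_I])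
qed

lemma weighted_sup_le_wnorm:
  assumes gf: "growth_family \<omega>" and c: "dominating_weight \<omega> d c"
  shows "\<exists>C>0. \<forall>g\<in>lk \<omega> d k. weighted_sup c g \<le> C * wnorm \<omega> d k g"
proof -
  obtain \<delta> :: real where \<delta>: "\<delta> > 0" "\<forall>\<tau>. \<delta> * \<omega> k (d \<tau>) \<le> c \<tau>"
    using c unfolding dominating_weight_def by blast
  have "weighted_sup c g \<le> 1 / \<delta> * wnorm \<omega> d k g" if "g \<in> lk \<omega> d k" for g
    unfolding weighted_sup_def using norm_div_weight_le_wnorm[OF gf that \<delta>] c
    unfolding dominating_weight_def by (intro cSUP_least) auto
  then show ?thesis using \<delta>(1) by (intro exI[of _ "1 / \<delta>"]) auto
qed

lemma weighted_sup_lincomb: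
  assumes gf: "growth_family \<omega>" and c: "dominating_weight \<omega> d c"
    and f: "f \<in> lk_union \<omega> d" and g: "g \<in> lk_union \<omega> d"
  shows "weighted_sup c (\<lambda>\<tau>. a *\<^sub>R f \<tau> + b *\<^sub>R g \<tau>) \<le> \<bar>a\<bar> * weighted_sup c f + \<bar>b\<bar> * weighted_sup c g"
  unfolding weighted_sup_def[of c "\<lambda>\<tau>. a *\<^sub>R f \<tau> + b *\<^sub>R g \<tau>"]
proof (rule cSUP_least)
  fix \<tau>
  have c\<tau>: "c \<tau> > 0" using c unfolding dominating_weight_def by blast
  have "norm (a *\<^sub>R f \<tau> + b *\<^sub>R g \<tau>) / c \<tau> \<le> (\<bar>a\<bar> * norm (f \<tau>) + \<bar>b\<bar> * norm (g \<tau>)) / c \<tau>"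
    using norm_triangle_ineq[of "a *\<^sub>R f \<tau>" "b *\<^sub>R g \<tau>"] c\<tau> by (simp add: divide_right_mono)
  also have "\<dots> = \<bar>a\<bar> * (norm (f \<tau>) / c \<tau>) + \<bar>b\<bar> * (norm (g \<tau>) / c \<tau>)"
    by (simp add: add_divide_distrib)
  also have "\<dots> \<le> \<bar>a\<bar> * weighted_sup c f + \<bar>b\<bar> * weighted_sup c g"
    by (intro add_mono mult_left_mono norm_div_weight_le_weighted_sup[OF gf c] f g) auto
  finally show "norm (a *\<^sub>R f \<tau> + b *\<^sub>R g \<tau>) / c \<tau> \<le> \<bar>a\<bar> * weighted_sup c f + \<bar>b\<bar> * weighted_sup c g" .
qed simp

lemma compactin_dl_top_weight_bounded:
  fixes d :: "'j \<Rightarrow> nat" and K :: "('j \<Rightarrow> 'b::real_normed_vector) set"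
  assumes gf: "growth_family \<omega>" and K: "compactin (dl_top \<omega> d UNIV) K"
    and c: "dominating_weight \<omega> d c"
  shows "\<exists>m. \<forall>f\<in>K. \<forall>\<tau>. norm (f \<tau>) \<le> m * c \<tau>"
proof -
  define U :: "nat \<Rightarrow> ('j \<Rightarrow> 'b) set"
    where "U m = {g \<in> lk_union \<omega> d. weighted_sup c (\<lambda>\<tau>. g \<tau> - 0) < real m}" for m
  have "\<exists>m. K \<subseteq> U m"
  proof (rule compactin_subset_incseq_openin[OF K])
    show "openin (dl_top \<omega> d UNIV) (U m)" for m
      unfolding U_def
      by (rule openin_dl_top_seminorm_ball[OF gf weighted_sup_lincomb[OF gf c]
            weighted_sup_le_wnorm[OF gf c] zero_in_lk_union[OF gf]])
    show "incseq U" unfolding U_def incseq_def by auto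
    show "K \<subseteq> (\<Union>m. U m)"
    proof
      fix f assume "f \<in> K"
      then have "f \<in> lk_union \<omega> d"
        using compactin_subset_topspace[OF K] by (auto simp: topspace_dl_top[OF gf])
      moreover obtain m where "weighted_sup c f < real m" using reals_Archimedean2 by blast
      ultimately show "f \<in> (\<Union>m. U m)" unfolding U_def by auto
    qed
  qed
  then obtain m where m: "K \<subseteq> U m" by blast
  have "norm (f \<tau>) \<le> m * c \<tau>" if f: "f \<in> K" for f \<tau>
  proof -
    have "f \<in> lk_union \<omega> d" "weighted_sup c f < m" using m f unfolding U_def by auto
    then have "norm (f \<tau>) / c \<tau> \<le> m" using norm_div_weight_le_weighted_sup[OF gf c, of f \<tau>] by linarith
    then show ?thesis using c unfolding dominating_weight_def by (simp add: pos_divide_le_eq)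
  qed
  then show ?thesis by blast
qed

lemma strict_mono_left_inverse_at_top:
  fixes r :: "nat \<Rightarrow> nat"
  assumes r: "strict_mono r"
  obtains h where "\<And>k. h (r k) = k" "filterlim h at_top sequentially"
proof
  define h where "h n = (LEAST k. n \<le> r k)" for n
  have n_le: "n \<le> r (h n)" for n
    unfolding h_def by (rule LeastI[of _ n]) (rule seq_suble[OF r])
  show "h (r k) = k" for k
    unfolding h_def by (rule Least_equality) (auto simp: strict_mono_less_eq[OF r])
  have "j \<le> h n" if "r j < n" for j n
    using n_le[of n] that strict_mono_less_eq[OF r, of j "h n"] by linarith
  then have "eventually (\<lambda>n. j \<le> h n) sequentially" for j
    unfolding eventually_sequentially by (intro exI[of _ "Suc (r j)"]) auto
  then show "filterlim h at_top sequentially" by (simp add: filterlim_at_top)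
qed

lemma dominating_weight_diagonal:
  assumes gf: "growth_family \<omega>" and h: "filterlim h at_top sequentially"
  shows "dominating_weight \<omega> d (\<lambda>\<tau>. real (\<omega> (h (d \<tau>)) (d \<tau>)))"
  unfolding dominating_weight_def
proof (intro conjI allI)
  show "real (\<omega> (h (d \<tau>)) (d \<tau>)) > 0" for \<tau>
    using growth_family_ge_1[OF gf, of "h (d \<tau>)" "d \<tau>"] by linarith
  fix k
  have "eventually (\<lambda>n. k \<le> h n) sequentially" using h by (simp add: filterlim_at_top)
  then obtain N where N: "\<And>n. N \<le> n \<Longrightarrow> k \<le> h n" unfolding eventually_sequentially by blast
  text \<open>Only the finitely many degrees below N are not dominated by monotonicity in k.\<close>
  define \<delta> :: real where "\<delta> = 1 / (1 + (\<Sum>n<N. real (\<omega> k n)))"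
  have sum_nonneg: "(\<Sum>n<N. real (\<omega> k n)) \<ge> 0" by (simp add: sum_nonneg)
  have \<delta>: "\<delta> > 0" "\<delta> \<le> 1" unfolding \<delta>_def using sum_nonneg by auto
  have "\<delta> * \<omega> k (d \<tau>) \<le> \<omega> (h (d \<tau>)) (d \<tau>)" for \<tau>
  proof (cases "d \<tau> < N")
    case True
    have "real (\<omega> k (d \<tau>)) \<le> (\<Sum>n<N. real (\<omega> k n))"
      using True by (intro member_le_sum) auto
    then have "\<delta> * \<omega> k (d \<tau>) \<le> \<delta> * (1 + (\<Sum>n<N. real (\<omega> k n)))"
      using \<delta>(1) by (intro mult_left_mono) auto
    also have "\<dots> = 1" unfolding \<delta>_def using sum_nonneg by simp
    finally show ?thesis using growth_family_ge_1[OF gf, of "h (d \<tau>)" "d \<tau>"] by linarith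
  next
    case False
    then have "real (\<omega> k (d \<tau>)) \<le> \<omega> (h (d \<tau>)) (d \<tau>)" using N growth_family_mono[OF gf] by simp
    moreover have "\<delta> * \<omega> k (d \<tau>) \<le> \<omega> k (d \<tau>)" using \<delta> by (simp add: mult_left_le_one_le)
    ultimately show ?thesis by linarith
  qed
  then show "\<exists>\<delta>>(0::real). \<forall>\<tau>. \<delta> * \<omega> k (d \<tau>) \<le> \<omega> (h (d \<tau>)) (d \<tau>)"
    using \<delta>(1) by blast
qed

lemma unbounded_at_high_degrees:
  fixes d :: "'j \<Rightarrow> nat" and K :: "('j \<Rightarrow> 'b::real_normed_vector) set" and m :: real
  assumes gf: "growth_family \<omega>"
    and diagonal: "\<forall>f\<in>K. \<forall>\<tau>. norm (f \<tau>) \<le> m * \<omega> (d \<tau>) (d \<tau>)"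
    and unbounded: "\<not> (\<exists>k (M::real). \<forall>f\<in>K. \<forall>\<tau>. norm (f \<tau>) \<le> M * \<omega> k (d \<tau>))"
  shows "\<exists>f\<in>K. \<exists>\<tau>. N < d \<tau> \<and> real k * \<omega> k (d \<tau>) < norm (f \<tau>)"
proof -
  define M where "M = real k + \<bar>m\<bar> * (\<Sum>n\<le>N. real (\<omega> n n))"
  have k_le_M: "real k \<le> M" unfolding M_def by (simp add: sum_nonneg)
  obtain f \<tau> where f: "f \<in> K" and big: "M * \<omega> k (d \<tau>) < norm (f \<tau>)"
    using unbounded by (meson not_le)
  have "N < d \<tau>"
  proof (rule ccontr)
    assume "\<not> N < d \<tau>"
    then have "norm (f \<tau>) \<le> \<bar>m\<bar> * (\<Sum>n\<le>N. real (\<omega> n n))"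
      using diagonal f member_le_sum[of "d \<tau>" "{..N}" "\<lambda>n. real (\<omega> n n)"]
      by (smt (verit) abs_ge_self abs_ge_zero atMost_iff finite_atMost mult_mono not_le of_nat_0_le_iff)
    also have "\<dots> \<le> M * \<omega> k (d \<tau>)"
      using k_le_M growth_family_ge_1[OF gf, of k "d \<tau>"] unfolding M_def
      by (smt (verit) mult_left_le_one_le of_nat_0_le_iff mult_le_cancel_left1)
    finally show False using big by simp
  qed
  moreover have "real k * \<omega> k (d \<tau>) < norm (f \<tau>)"
    using big k_le_M by (smt (verit) mult_right_mono of_nat_0_le_iff)
  ultimately show ?thesis using f by blast
qed

lemma compactin_dl_top_bounded:
  fixes d :: "'j \<Rightarrow> nat" and K :: "('j \<Rightarrow> 'b::real_normed_vector) set"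
  assumes gf: "growth_family \<omega>" and K: "compactin (dl_top \<omega> d UNIV) K"
  shows "\<exists>k (M::real). \<forall>f\<in>K. \<forall>\<tau>. norm (f \<tau>) \<le> M * \<omega> k (d \<tau>)"
proof (rule ccontr)
  assume unbounded: "\<not> ?thesis"
  obtain m :: real where "\<forall>f\<in>K. \<forall>\<tau>. norm (f \<tau>) \<le> m * \<omega> (d \<tau>) (d \<tau>)"
    using compactin_dl_top_weight_bounded[OF gf K dominating_weight_diagonal[OF gf filterlim_ident]]
    by auto
  note violation = unbounded_at_high_degrees[OF gf this unbounded]
  text \<open>Collect violations of the k-th bound at strictly increasing degrees. Reading the degree
    of the k-th violation back as k yields a dominating weight for which K is still unbounded.\<close>
  have "\<exists>x. \<forall>k. (fst (x k) \<in> K \<and> real k * \<omega> k (d (snd (x k))) < norm (fst (x k) (snd (x k)))) \<and>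
      d (snd (x k)) < d (snd (x (Suc k)))"
  proof (rule dependent_nat_choice)
    show "\<exists>x. fst x \<in> K \<and> real 0 * \<omega> 0 (d (snd x)) < norm (fst x (snd x))"
      using violation[of 0 0] by force
    fix x k
    obtain f \<tau> where "f \<in> K" "d (snd x) < d \<tau>" "real (Suc k) * \<omega> (Suc k) (d \<tau>) < norm (f \<tau>)"
      using violation[of "d (snd x)" "Suc k"] by blast
    then show "\<exists>y. (fst y \<in> K \<and> real (Suc k) * \<omega> (Suc k) (d (snd y)) < norm (fst y (snd y))) \<and>
        d (snd x) < d (snd y)"
      by (intro exI[of _ "(f, \<tau>)"]) auto
  qed
  then obtain x where x: "\<And>k. fst (x k) \<in> K"
      "\<And>k. real k * \<omega> k (d (snd (x k))) < norm (fst (x k) (snd (x k)))"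
      "strict_mono (\<lambda>k. d (snd (x k)))"
    unfolding strict_mono_Suc_iff by blast
  obtain h where h: "\<And>k. h (d (snd (x k))) = k" "filterlim h at_top sequentially"
    using strict_mono_left_inverse_at_top[OF x(3)] by blast
  obtain m' :: real where m': "\<forall>f\<in>K. \<forall>\<tau>. norm (f \<tau>) \<le> m' * \<omega> (h (d \<tau>)) (d \<tau>)"
    using compactin_dl_top_weight_bounded[OF gf K dominating_weight_diagonal[OF gf h(2)]] by blast
  obtain k :: nat where "m' \<le> k" using real_arch_simple by blast
  then have "norm (fst (x k) (snd (x k))) \<le> real k * \<omega> k (d (snd (x k)))"
    using m' x(1)[of k] h(1)[of k] by (smt (verit) mult_right_mono of_nat_0_le_iff)
  then show False using x(2)[of k] by simp
qed

lemma compactin_dl_top_imp_compactin_step_top: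
  fixes d :: "'j \<Rightarrow> nat" and K :: "('j \<Rightarrow> 'b::real_normed_vector) set"
  assumes gf: "growth_family \<omega>" and ft: "finite_type_grading d"
    and S: "finite (S :: 'b set)" "span S = UNIV"
    and K: "compactin (dl_top \<omega> d UNIV) K"
  shows "\<exists>k. K \<subseteq> lk \<omega> d k \<and> compactin (step_top \<omega> d k) K"
proof -
  obtain k and M :: real where M: "\<forall>f\<in>K. \<forall>\<tau>. norm (f \<tau>) \<le> M * \<omega> k (d \<tau>)"
    using compactin_dl_top_bounded[OF gf K] by blast
  obtain k' where doubling: "\<And>n. 2 ^ n * \<omega> k n \<le> \<omega> k' n"
    using gf unfolding growth_family_def by blast
  let ?W = "weighted_ball \<omega> d k (max M 0) :: ('j \<Rightarrow> 'b) set"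
  have "M * \<omega> k (d \<tau>) \<le> max M 0 * \<omega> k (d \<tau>)" for \<tau> by (simp add: mult_right_mono)
  then have KW: "K \<subseteq> ?W"
    using M unfolding weighted_ball_def by (auto intro: order_trans)
  have W: "compactin (step_top \<omega> d k') ?W"
    by (rule compactin_step_top_weighted_ball[OF gf ft S doubling]) simp
  have "closedin (dl_top \<omega> d UNIV) K"
    by (rule compactin_imp_closedin[OF Hausdorff_space_dl_top[OF gf] K])
  then have "closedin (step_top \<omega> d k') {f \<in> topspace (step_top \<omega> d k'). id f \<in> K}"
    by (rule closedin_continuous_map_preimage[OF continuous_map_step_top_dl_top[OF gf]])
  moreover have "{f \<in> topspace (step_top \<omega> d k'). id f \<in> K} = K"
    using compactin_subset_topspace[OF W] KW by auto
  ultimately have "closedin (step_top \<omega> d k') K" by simp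
  then have "compactin (step_top \<omega> d k') K" by (rule closed_compactin[OF W KW])
  then show ?thesis using compactin_subset_topspace topspace_step_top by metis
qed

theorem lemmaB5:
  fixes \<omega> :: "nat \<Rightarrow> nat \<Rightarrow> nat" and d :: "'j \<Rightarrow> nat"
  assumes "growth_family \<omega>"
    and "finite_type_grading d"
    and "\<exists>S::'b::banach set. finite S \<and> span S = UNIV"
  shows "(\<exists>\<kappa>::nat \<Rightarrow> nat. strict_mono \<kappa> \<and>
            (\<forall>n. (lk \<omega> d (\<kappa> n) :: ('j \<Rightarrow> 'b) set) \<subseteq> lk \<omega> d (\<kappa> (Suc n)) \<and>
                 (\<exists>C :: ('j \<Rightarrow> 'b) set. compactin (step_top \<omega> d (\<kappa> (Suc n))) C \<and>
                      {f \<in> lk \<omega> d (\<kappa> n). wnorm \<omega> d (\<kappa> n) f \<le> 1} \<subseteq> C)) \<and>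
            dl_top \<omega> d (range \<kappa>) = (dl_top \<omega> d UNIV :: ('j \<Rightarrow> 'b) topology))
       \<and> (\<forall>K :: ('j \<Rightarrow> 'b) set. compactin (dl_top \<omega> d UNIV) K \<longrightarrow>
            (\<exists>k. K \<subseteq> lk \<omega> d k \<and> compactin (step_top \<omega> d k) K))"
proof -
  note gf = assms(1) and ft = assms(2)
  obtain S :: "'b set" where S: "finite S" "span S = UNIV" using assms(3) by blast
  obtain \<kappa> where \<kappa>: "strict_mono \<kappa>" and doubling: "\<And>n m. 2 ^ m * \<omega> (\<kappa> n) m \<le> \<omega> (\<kappa> (Suc n)) m"
    using growth_family_doubling_subseq[OF gf] by blast
  have "(lk \<omega> d (\<kappa> n) :: ('j \<Rightarrow> 'b) set) \<subseteq> lk \<omega> d (\<kappa> (Suc n))" for n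
    using lk_mono(1)[OF gf] strict_mono_less_eq[OF \<kappa>, of n "Suc n"] by auto
  moreover have "compactin (step_top \<omega> d (\<kappa> (Suc n))) (weighted_ball \<omega> d (\<kappa> n) 1 :: ('j \<Rightarrow> 'b) set)" for n
    by (rule compactin_step_top_weighted_ball[OF gf ft S doubling]) simp
  moreover have "dl_top \<omega> d (range \<kappa>) = (dl_top \<omega> d UNIV :: ('j \<Rightarrow> 'b) topology)"
    using dl_top_cofinal[OF gf] seq_suble[OF \<kappa>] by blast
  ultimately show ?thesis
    using \<kappa> wnorm_ball_subset_weighted_ball[OF gf] compactin_dl_top_imp_compactin_step_top[OF gf ft S]
    by blast
qed

end
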